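(* For each positive integer $n$, let $I_n$ be the instance of online stochastic matching with timeouts with $n$ items, $m=n$ customer types, $T=n$ time-steps, $q_j=1/n$, $\ell_j=n$ for all $j$, and $p_{ij}=1/n$, $r_{ij}=1$ for all $i,j$. Let $\mathsf{OPT}_n$ be the optimal value of the LP for $I_n$ and let $A_n$ be the supremum, over all policies, of the expected revenue on $I_n$. Then $\limsup_{n\to\infty} A_n/\mathsf{OPT}_n\le 1-\ln(2-1/e)$. Consequently, for every $\epsilon>0$ there is an instance (satisfying both $\sum_i p_{ij}\le 1$ and $\ell_j\ge n$ for every $j$) on which no policy obtains expected revenue larger than $(1-\ln(2-1/e)+\epsilon)\cdot\mathsf{OPT}$.
   Context: Online stochastic matching with timeouts. There are $n$ items, each with a single unit of inventory, $m$ customer types, and $T$ discrete time-steps. In each time-step $t=1,\dots,T$, independently of everything else, a customer of type $j$ arrives with probability $q_j\ge 0$ (where $\sum_{j}q_j\le 1$). Each type $j$ has a patience level $\ell_j\in\mathbb{Z}_{>0}$. When a customer of type $j$ arrives, the platform may offer her items one at a time; it may only offer items still in inventory and never offers the same item twice to the same customer. Each time item $i$ is offered, she purchases it with probability $p_{ij}\in[0,1]$, independently of everything else; then the platform earns $r_{ij}\ge 0$, item $i$ is sold out, and the customer leaves. The customer leaves after $\ell_j$ offers without a purchase. A customer is completely processed before the next time-step. A policy decides (possibly randomly) what to offer. The LP is: maximize $\sum_{j=1}^m Tq_j\sum_{i=1}^n r_{ij}p_{ij}x_{ij}$ subject to $\sum_{j=1}^m Tq_jp_{ij}x_{ij}\le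 1$ for all $i$; $\sum_{i=1}^n p_{ij}x_{ij}\le 1$ for all $j$; $\sum_{i=1}^n x_{ij}\le \ell_j$ for all $j$; $0\le x_{ij}\le 1$ for all $i,j$. *)

theory Defs
  imports "HOL-Probability.Probability"
begin

text \<open>Items are 0..<n, customer types 0..<m.
  A history is the list of all events so far: an arrival at a time step (Some j = customer
  of type j, None = nobody arrives), or an offer of item i with its outcome (True = purchase).\<close>

datatype event = Arrive "nat option" | Offer nat bool

text \<open>A (possibly randomized, history-dependent) policy: given the history, while a customer
  is being processed, it draws either None (stop offering) or Some i (offer item i).\<close>
type_synonym policy = "event list \<Rightarrow> nat option pmf"

definition is_arrive :: "event \<Rightarrow> bool" where
  "is_arrive e = (case e of Arrive _ \<Rightarrow> True | Offer _ _ \<Rightarrow> False)"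

definition sold_items :: "event list \<Rightarrow> nat set" where
  "sold_items h = {i. Offer i True \<in> set h}"

definition current_offers :: "event list \<Rightarrow> nat set" where
  "current_offers h = {i. \<exists>b. Offer i b \<in> set (takeWhile (\<lambda>e. \<not> is_arrive e) (rev h))}"

definition valid_policy :: "nat \<Rightarrow> policy \<Rightarrow> bool" where
  "valid_policy n \<pi> \<longleftrightarrow> (\<forall>h a. a \<in> set_pmf (\<pi> h) \<longrightarrow>
      (case a of None \<Rightarrow> True
       | Some i \<Rightarrow> i < n \<and> i \<notin> sold_items h \<and> i \<notin> current_offers h))"

text \<open>Expected revenue from the processing of a customer of type j who has k offers left
  (patience), given the history h; after is the expected revenue of the remaining time steps
  as a function of the history at the end of this customer's processing.\<close>
primrec serve :: "(event list \<Rightarrow> real) \<Rightarrow> policy \<Rightarrow> (nat \<Rightarrow> nat \<Rightarrow> real) \<Rightarrow>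
    (nat \<Rightarrow> nat \<Rightarrow> real) \<Rightarrow> nat \<Rightarrow> nat \<Rightarrow> event list \<Rightarrow> real" where
  "serve after \<pi> p r j 0 h = after h"
| "serve after \<pi> p r j (Suc k) h =
     measure_pmf.expectation (\<pi> h) (\<lambda>a. case a of
        None \<Rightarrow> after h
      | Some i \<Rightarrow> p i j * (r i j + after (h @ [Offer i True]))
                 + (1 - p i j) * serve after \<pi> p r j k (h @ [Offer i False]))"

primrec rev_from :: "nat \<Rightarrow> nat \<Rightarrow> (nat \<Rightarrow> real) \<Rightarrow> (nat \<Rightarrow> nat) \<Rightarrow> (nat \<Rightarrow> nat \<Rightarrow> real) \<Rightarrow>
    (nat \<Rightarrow> nat \<Rightarrow> real) \<Rightarrow> policy \<Rightarrow> event list \<Rightarrow> real" where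
  "rev_from m 0 q l p r \<pi> h = 0"
| "rev_from m (Suc t) q l p r \<pi> h =
     (\<Sum>j<m. q j * serve (rev_from m t q l p r \<pi>) \<pi> p r j (l j) (h @ [Arrive (Some j)]))
     + (1 - (\<Sum>j<m. q j)) * rev_from m t q l p r \<pi> (h @ [Arrive None])"

definition expected_revenue :: "nat \<Rightarrow> nat \<Rightarrow> nat \<Rightarrow> (nat \<Rightarrow> real) \<Rightarrow> (nat \<Rightarrow> nat) \<Rightarrow>
    (nat \<Rightarrow> nat \<Rightarrow> real) \<Rightarrow> (nat \<Rightarrow> nat \<Rightarrow> real) \<Rightarrow> policy \<Rightarrow> real" where
  "expected_revenue n m T q l p r \<pi> = rev_from m T q l p r \<pi> []"

definition best_revenue :: "nat \<Rightarrow> nat \<Rightarrow> nat \<Rightarrow> (nat \<Rightarrow> real) \<Rightarrow> (nat \<Rightarrow> nat) \<Rightarrow>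
    (nat \<Rightarrow> nat \<Rightarrow> real) \<Rightarrow> (nat \<Rightarrow> nat \<Rightarrow> real) \<Rightarrow> real" where
  "best_revenue n m T q l p r = Sup {expected_revenue n m T q l p r \<pi> | \<pi>. valid_policy n \<pi>}"

definition lp_feasible :: "nat \<Rightarrow> nat \<Rightarrow> nat \<Rightarrow> (nat \<Rightarrow> real) \<Rightarrow> (nat \<Rightarrow> nat) \<Rightarrow>
    (nat \<Rightarrow> nat \<Rightarrow> real) \<Rightarrow> (nat \<Rightarrow> nat \<Rightarrow> real) \<Rightarrow> bool" where
  "lp_feasible n m T q l p x \<longleftrightarrow>
     (\<forall>i<n. (\<Sum>j<m. real T * q j * p i j * x i j) \<le> 1) \<and>
     (\<forall>j<m. (\<Sum>i<n. p i j * x i j) \<le> 1) \<and>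
     (\<forall>j<m. (\<Sum>i<n. x i j) \<le> real (l j)) \<and>
     (\<forall>i<n. \<forall>j<m. 0 \<le> x i j \<and> x i j \<le> 1)"

definition lp_objective :: "nat \<Rightarrow> nat \<Rightarrow> nat \<Rightarrow> (nat \<Rightarrow> real) \<Rightarrow>
    (nat \<Rightarrow> nat \<Rightarrow> real) \<Rightarrow> (nat \<Rightarrow> nat \<Rightarrow> real) \<Rightarrow> (nat \<Rightarrow> nat \<Rightarrow> real) \<Rightarrow> real" where
  "lp_objective n m T q p r x = (\<Sum>j<m. real T * q j * (\<Sum>i<n. r i j * p i j * x i j))"

definition lp_opt :: "nat \<Rightarrow> nat \<Rightarrow> nat \<Rightarrow> (nat \<Rightarrow> real) \<Rightarrow> (nat \<Rightarrow> nat) \<Rightarrow>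
    (nat \<Rightarrow> nat \<Rightarrow> real) \<Rightarrow> (nat \<Rightarrow> nat \<Rightarrow> real) \<Rightarrow> real" where
  "lp_opt n m T q l p r = Sup {lp_objective n m T q p r x | x. lp_feasible n m T q l p x}"

definition instance_ok :: "nat \<Rightarrow> nat \<Rightarrow> nat \<Rightarrow> (nat \<Rightarrow> real) \<Rightarrow> (nat \<Rightarrow> nat) \<Rightarrow>
    (nat \<Rightarrow> nat \<Rightarrow> real) \<Rightarrow> (nat \<Rightarrow> nat \<Rightarrow> real) \<Rightarrow> bool" where
  "instance_ok n m T q l p r \<longleftrightarrow>
     (\<forall>j<m. 0 \<le> q j) \<and> (\<Sum>j<m. q j) \<le> 1 \<and> (\<forall>j<m. 0 < l j) \<and>
     (\<forall>i<n. \<forall>j<m. 0 \<le> p i j \<and> p i j \<le> 1 \<and> 0 \<le> r i j)"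

definition A_n :: "nat \<Rightarrow> real" where
  "A_n n = best_revenue n n n (\<lambda>_. 1 / real n) (\<lambda>_. n) (\<lambda>_ _. 1 / real n) (\<lambda>_ _. 1)"

definition OPT_n :: "nat \<Rightarrow> real" where
  "OPT_n n = lp_opt n n n (\<lambda>_. 1 / real n) (\<lambda>_. n) (\<lambda>_ _. 1 / real n) (\<lambda>_ _. 1)"

end

theory Submission
  imports Defs "HOL-Real_Asymp.Real_Asymp"
begin

text \<open>On I_n every arrival is a customer with patience n and every offer succeeds with
  probability 1/n, so a customer facing s unsold items buys with probability at most
  1 - (1 - 1/n)^s. The value of any policy with t steps to go and s unsold items is
  dominated by a potential a_t + (1 - g_t) s that is linear in s: a sale earns 1 but
  destroys an item of marginal value 1 - g_t, and the potential satisfies the Bellman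
  inequality U_t(s) + g_t (1 - (1 - 1/n)^s) \<le> U_{t+1}(s), an instance of the Fenchel-type
  inequality (1 - e^{-w})(K + y) \<le> K - y ln(1 + K/y) + y w. Hence A_n \<le> U_n(n), and
  U_n(n)/n is a Riemann sum converging to 1 - ln(2 - 1/e), while OPT_n = n.\<close>

lemma one_minus_exp_mult_le:
  fixes y K w :: real
  assumes y: "y > 0" and K: "K > 0"
  shows "(1 - exp (-w)) * (K + y) \<le> K - y * ln (1 + K / y) + y * w"
proof -
  define u where "u = (K + y) * exp (-w) / y"
  have u: "u > 0" using y K by (simp add: u_def)
  have "ln u = ln (K + y) - w - ln y" using y K by (simp add: u_def ln_div ln_mult)
  moreover have "ln (1 + K / y) = ln (K + y) - ln y" using y K by (simp add: ln_div field_simps)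
  ultimately have "ln u = ln (1 + K / y) - w" by simp
  with ln_le_minus_one[OF u] have "y * (ln (1 + K / y) - w) \<le> y * (u - 1)"
    using y by (intro mult_left_mono) auto
  moreover have "y * u = (K + y) * exp (-w)" using y by (simp add: u_def)
  ultimately show ?thesis by (simp add: algebra_simps)
qed

lemma log_sum_le:
  fixes x z K :: real
  assumes x: "x > 0" and z: "z > 0" and K: "K > 0"
  shows "(z + K) * ln ((z + K) / (x + K)) \<le> z * ln (z / x)"
proof -
  define u where "u = x * (z + K) / (z * (x + K))"
  define v where "v = (z + K) / (x + K)"
  have "z * ln u + K * ln v \<le> z * (u - 1) + K * (v - 1)"
    using x z K by (intro add_mono mult_left_mono ln_le_minus_one) (auto simp: u_def v_def)
  also have "\<dots> = (x + K) * v - (z + K)"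
  proof -
    have "z * u = x * v" using z by (simp add: u_def v_def)
    then show ?thesis by (simp add: algebra_simps)
  qed
  also have "\<dots> = 0" using x K by (simp add: v_def)
  finally have "z * ln u + K * ln v \<le> 0" .
  moreover have "ln u = ln v - ln (z / x)"
    using x z K by (simp add: u_def v_def ln_div ln_mult)
  ultimately show ?thesis by (simp add: v_def algebra_simps)
qed

text \<open>An antiderivative of the decreasing function v \<mapsto> ln (1 + K / v); the sums in the
  potential below are Riemann sums of this function.\<close>
definition Phi :: "real \<Rightarrow> real \<Rightarrow> real" where
  "Phi K v = (v + K) * ln (v + K) - v * ln v"

lemma Phi_diff_le:
  fixes x z K :: real
  assumes x: "x > 0" and z: "z > 0" and K: "K > 0"
  shows "Phi K z - Phi K x \<le> (z - x) * ln (1 + K / x)"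
proof -
  have "ln ((z + K) / (x + K)) = ln (z + K) - ln (x + K)" and "ln (z / x) = ln z - ln x"
    using x z K by (simp_all add: ln_div)
  with log_sum_le[OF x z K] have "(z + K) * (ln (z + K) - ln (x + K)) \<le> z * (ln z - ln x)"
    by simp
  moreover have "ln (1 + K / x) = ln (x + K) - ln x" using x K by (simp add: ln_div field_simps)
  ultimately show ?thesis unfolding Phi_def by (simp only:) (simp add: algebra_simps)
qed

lemma Phi_le_geometric_sum:
  fixes K \<rho> :: real
  assumes K: "K > 0" and \<rho>: "0 < \<rho>" "\<rho> < 1"
  shows "\<rho> / (1 - \<rho>) * (Phi K 1 - Phi K (\<rho> ^ m)) \<le> (\<Sum>k<Suc m. \<rho> ^ k * ln (1 + K / \<rho> ^ k))"
proof (induction m)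
  case 0
  show ?case using K by simp
next
  case (Suc m)
  define x where "x = \<rho> ^ Suc m"
  define z where "z = \<rho> ^ m"
  have x: "x > 0" and z: "z > 0" using \<rho> by (auto simp: x_def z_def)
  have "\<rho> / (1 - \<rho>) * (Phi K z - Phi K x) \<le> \<rho> / (1 - \<rho>) * ((z - x) * ln (1 + K / x))"
    using Phi_diff_le[OF x z K] \<rho> by (intro mult_left_mono) auto
  also have "\<dots> = x * ln (1 + K / x)"
    using \<rho> by (simp add: x_def z_def field_simps)
  finally have "\<rho> / (1 - \<rho>) * (Phi K z - Phi K x) \<le> x * ln (1 + K / x)" .
  with Suc.IH show ?case by (simp add: x_def z_def algebra_simps)
qed

text \<open>Every positive K gives an upper bound; this value minimises its limit.\<close>
definition K_opt :: real where
  "K_opt = 1 - exp (-1)"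

definition lam :: "nat \<Rightarrow> real" where
  "lam n = - ln (1 - 1 / real n)"

definition rho :: "nat \<Rightarrow> real" where
  "rho n = 1 - lam n"

text \<open>With t steps to go and s unsold items, potential n t s bounds the expected revenue of
  every policy on I_n; 1 - sale_gain n t is the marginal value of an unsold item.\<close>
definition sale_gain :: "nat \<Rightarrow> nat \<Rightarrow> real" where
  "sale_gain n t = (K_opt + rho n ^ t) / (K_opt + 1)"

definition potential_base :: "nat \<Rightarrow> nat \<Rightarrow> real" where
  "potential_base n t = (\<Sum>k<t. K_opt - rho n ^ k * ln (1 + K_opt / rho n ^ k)) / (K_opt + 1)"

definition potential :: "nat \<Rightarrow> nat \<Rightarrow> nat \<Rightarrow> real" where
  "potential n t s = potential_base n t + (1 - sale_gain n t) * real s"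

lemma K_opt_pos: "K_opt > 0"
  by (simp add: K_opt_def)

lemma exp_minus_one_less_half: "exp (-1 :: real) < 1 / 2"
proof -
  have "exp (1 :: real) > (1 + 1 / 1) powr 1" by (rule exp_1_gt_powr) simp
  then show ?thesis by (simp add: exp_minus field_simps)
qed

lemma lam_bounds:
  assumes "n \<ge> 2"
  shows "0 < lam n" "lam n < 1"
proof -
  have n: "real n \<ge> 2" using assms by simp
  have g: "0 < 1 - 1 / real n" "1 - 1 / real n < 1" using n by (auto simp: field_simps)
  then show "0 < lam n" by (simp add: lam_def)
  have "1 / 2 \<le> 1 - 1 / real n" using n by (simp add: field_simps)
  with exp_minus_one_less_half have "exp (-1) < 1 - 1 / real n" by linarith
  then have "ln (exp (-1)) < ln (1 - 1 / real n)" using g by (subst ln_less_cancel_iff) auto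
  then show "lam n < 1" by (simp add: lam_def)
qed

lemma rho_bounds: "n \<ge> 2 \<Longrightarrow> 0 < rho n \<and> rho n < 1"
  using lam_bounds[of n] by (simp add: rho_def)

lemma refusal_power_eq:
  assumes "n \<ge> 2"
  shows "(1 - 1 / real n) ^ s = exp (- (lam n * real s))"
proof -
  have "0 < 1 - 1 / real n" using assms by (simp add: field_simps)
  then have "(1 - 1 / real n) ^ s = exp (ln (1 - 1 / real n)) ^ s" by simp
  also have "\<dots> = exp (- (lam n * real s))" by (simp add: lam_def exp_of_nat_mult[symmetric])
  finally show ?thesis .
qed

lemma sale_gain_nonneg: "n \<ge> 2 \<Longrightarrow> sale_gain n t \<ge> 0"
  using rho_bounds[of n] K_opt_pos by (simp add: sale_gain_def)

lemma potential_step: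
  assumes n: "n \<ge> 2"
  shows "potential n t s + sale_gain n t * (1 - (1 - 1 / real n) ^ s) \<le> potential n (Suc t) s"
proof -
  define y where "y = rho n ^ t"
  have y: "y > 0" using rho_bounds[OF n] by (simp add: y_def)
  have "sale_gain n t * (1 - (1 - 1 / real n) ^ s)
      = (1 - exp (- (lam n * real s))) * (K_opt + y) / (K_opt + 1)"
    by (simp add: refusal_power_eq[OF n] sale_gain_def y_def)
  also have "\<dots> \<le> (K_opt - y * ln (1 + K_opt / y) + y * (lam n * real s)) / (K_opt + 1)"
    using one_minus_exp_mult_le[OF y K_opt_pos] K_opt_pos by (simp add: divide_right_mono)
  finally show ?thesis
    by (simp add: potential_def potential_base_def sale_gain_def y_def rho_def
        add_divide_distrib diff_divide_distrib algebra_simps)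
qed

definition ratio_bound :: "nat \<Rightarrow> real" where
  "ratio_bound n = (K_opt - rho n / (real n * lam n) * (Phi K_opt 1 - Phi K_opt (rho n ^ (n - 1)))
     + (1 - rho n ^ n)) / (K_opt + 1)"

lemma potential_le_ratio_bound:
  assumes n: "n \<ge> 2"
  shows "potential n n n \<le> real n * ratio_bound n"
proof -
  have \<rho>: "0 < rho n" "rho n < 1" and lam: "1 - rho n = lam n" "lam n > 0"
    using rho_bounds[OF n] lam_bounds[OF n] by (auto simp: rho_def)
  have "Suc (n - 1) = n" using n by simp
  then have "rho n / lam n * (Phi K_opt 1 - Phi K_opt (rho n ^ (n - 1)))
      \<le> (\<Sum>k<n. rho n ^ k * ln (1 + K_opt / rho n ^ k))"
    using Phi_le_geometric_sum[OF K_opt_pos \<rho>, of "n - 1"] lam by simp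
  moreover have "potential n n n
      = (real n * K_opt - (\<Sum>k<n. rho n ^ k * ln (1 + K_opt / rho n ^ k)) + real n * (1 - rho n ^ n))
        / (K_opt + 1)"
  proof -
    have "1 - sale_gain n n = (1 - rho n ^ n) / (K_opt + 1)"
      using K_opt_pos by (simp add: sale_gain_def field_simps)
    then show ?thesis
      by (simp add: potential_def potential_base_def sum_subtractf add_divide_distrib ac_simps)
  qed
  moreover have "real n * ratio_bound n
      = (real n * K_opt - rho n / lam n * (Phi K_opt 1 - Phi K_opt (rho n ^ (n - 1)))
          + real n * (1 - rho n ^ n)) / (K_opt + 1)"
  proof -
    have "real n * (rho n / (real n * lam n) * D) = rho n / lam n * D" for D using n by simp
    then show ?thesis by (simp add: ratio_bound_def distrib_left right_diff_distrib)
  qed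
  ultimately show ?thesis using K_opt_pos by (simp add: divide_right_mono)
qed

lemma ratio_bound_tendsto: "ratio_bound \<longlonglongrightarrow> 1 - ln (2 - exp (-1))"
proof -
  have "rho \<longlonglongrightarrow> 1" unfolding rho_def lam_def by real_asymp
  moreover have "(\<lambda>n. real n * lam n) \<longlonglongrightarrow> 1" unfolding lam_def by real_asymp
  moreover have "(\<lambda>n. rho n ^ n) \<longlonglongrightarrow> exp (-1)" unfolding rho_def lam_def by real_asymp
  moreover have "(\<lambda>n. Phi K_opt (rho n ^ (n - 1))) \<longlonglongrightarrow> Phi K_opt (exp (-1))"
  proof -
    have "(\<lambda>n. rho n ^ (n - 1)) \<longlonglongrightarrow> exp (-1)" unfolding rho_def lam_def by real_asymp
    then show ?thesis unfolding Phi_def by (intro tendsto_intros) (auto simp: K_opt_def)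
  qed
  ultimately have "ratio_bound \<longlonglongrightarrow>
      (K_opt - 1 / 1 * (Phi K_opt 1 - Phi K_opt (exp (-1))) + (1 - exp (-1))) / (K_opt + 1)"
    unfolding ratio_bound_def using K_opt_pos by (intro tendsto_intros) auto
  moreover have "2 - exp (-1 :: real) > 0" using exp_minus_one_less_half by simp
  then have "(K_opt - 1 / 1 * (Phi K_opt 1 - Phi K_opt (exp (-1))) + (1 - exp (-1))) / (K_opt + 1)
      = 1 - ln (2 - exp (-1))"
    by (simp add: Phi_def K_opt_def field_simps)
  ultimately show ?thesis by simp
qed

definition unsold :: "nat \<Rightarrow> event list \<Rightarrow> nat" where
  "unsold n h = card ({..<n} - sold_items h)"

definition offerable :: "nat \<Rightarrow> event list \<Rightarrow> nat" where
  "offerable n h = card ({..<n} - sold_items h - current_offers h)"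

lemma sold_items_snoc_Offer:
  "sold_items (h @ [Offer i b]) = (if b then insert i (sold_items h) else sold_items h)"
  by (auto simp: sold_items_def)

lemma sold_items_snoc_Arrive: "sold_items (h @ [Arrive x]) = sold_items h"
  by (auto simp: sold_items_def)

lemma current_offers_snoc_Arrive: "current_offers (h @ [Arrive x]) = {}"
  by (simp add: current_offers_def is_arrive_def)

lemma current_offers_snoc_Offer: "current_offers (h @ [Offer i b]) = insert i (current_offers h)"
  by (auto simp: current_offers_def is_arrive_def)

lemma unsold_le: "unsold n h \<le> n"
  using card_mono[of "{..<n}" "{..<n} - sold_items h"] by (auto simp: unsold_def)

lemma unsold_snoc_sale:
  assumes "i < n" "i \<notin> sold_items h"
  shows "0 < unsold n h" "unsold n (h @ [Offer i True]) = unsold n h - 1"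
proof -
  have i: "i \<in> {..<n} - sold_items h" using assms by simp
  then show "0 < unsold n h" by (auto simp: unsold_def card_gt_0_iff)
  have "{..<n} - sold_items (h @ [Offer i True]) = {..<n} - sold_items h - {i}"
    by (auto simp: sold_items_snoc_Offer)
  then show "unsold n (h @ [Offer i True]) = unsold n h - 1"
    using i by (simp add: unsold_def card_Diff_singleton)
qed

lemma offerable_snoc_refusal:
  assumes "i < n" "i \<notin> sold_items h" "i \<notin> current_offers h"
  shows "0 < offerable n h" "offerable n (h @ [Offer i False]) = offerable n h - 1"
proof -
  have i: "i \<in> {..<n} - sold_items h - current_offers h" using assms by simp
  then show "0 < offerable n h" by (auto simp: offerable_def card_gt_0_iff)
  have "{..<n} - sold_items (h @ [Offer i False]) - current_offers (h @ [Offer i False])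
      = {..<n} - sold_items h - current_offers h - {i}"
    by (auto simp: sold_items_snoc_Offer current_offers_snoc_Offer)
  then show "offerable n (h @ [Offer i False]) = offerable n h - 1"
    using i by (simp add: offerable_def card_Diff_singleton)
qed

lemma valid_policy_SomeD:
  "valid_policy n \<pi> \<Longrightarrow> Some i \<in> set_pmf (\<pi> h) \<Longrightarrow>
     i < n \<and> i \<notin> sold_items h \<and> i \<notin> current_offers h"
  unfolding valid_policy_def by fastforce

lemma valid_policy_finite_support:
  assumes "valid_policy n \<pi>"
  shows "finite (set_pmf (\<pi> h))"
proof (rule finite_subset)
  show "set_pmf (\<pi> h) \<subseteq> insert None (Some ` {..<n})"
    using valid_policy_SomeD[OF assms] by (auto intro: option.exhaust)
qed simp

lemma pmf_expectation_le_const: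
  fixes f :: "'a \<Rightarrow> real"
  assumes "finite (set_pmf M)" "\<And>x. x \<in> set_pmf M \<Longrightarrow> f x \<le> c"
  shows "measure_pmf.expectation M f \<le> c"
  using assms
  by (intro measure_pmf.integral_le_const integrable_measure_pmf_finite)
     (auto simp: AE_measure_pmf_iff)

text \<open>A sale earns 1 but lowers the bound on the continuation by c, and with k offers left
  a sale happens with probability at most 1 - (1 - p)^k.\<close>
lemma serve_le:
  assumes \<pi>: "valid_policy n \<pi>" and p: "0 \<le> p" "p \<le> 1" and c: "c \<le> 1"
    and after: "\<And>h. after h \<le> a + c * real (unsold n h)"
  shows "serve after \<pi> (\<lambda>_ _. p) (\<lambda>_ _. 1) j k h
    \<le> a + c * real (unsold n h) + (1 - c) * (1 - (1 - p) ^ min k (offerable n h))"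
proof (induction k arbitrary: h)
  case 0
  show ?case using after[of h] by simp
next
  case (Suc k)
  define M where "M = a + c * real (unsold n h) + (1 - c) * (1 - (1 - p) ^ min (Suc k) (offerable n h))"
  have "(case x of None \<Rightarrow> after h
      | Some i \<Rightarrow> p * (1 + after (h @ [Offer i True]))
          + (1 - p) * serve after \<pi> (\<lambda>_ _. p) (\<lambda>_ _. 1) j k (h @ [Offer i False])) \<le> M"
    if x: "x \<in> set_pmf (\<pi> h)" for x
  proof (cases x)
    case None
    have "0 \<le> (1 - c) * (1 - (1 - p) ^ min (Suc k) (offerable n h))"
      using c p by (intro mult_nonneg_nonneg) (auto simp: power_le_one)
    then show ?thesis using after[of h] None by (simp add: M_def)
  next
    case (Some i)
    note i = valid_policy_SomeD[OF \<pi> x[unfolded Some]]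
    define s where "s = unsold n h"
    define m where "m = min k (offerable n h - 1)"
    have m: "min (Suc k) (offerable n h) = Suc m"
      using offerable_snoc_refusal[of i n h] i by (auto simp: m_def)
    have "after (h @ [Offer i True]) \<le> a + c * (real s - 1)"
      using after[of "h @ [Offer i True]"] unsold_snoc_sale[of i n h] i
      by (simp add: s_def of_nat_diff)
    moreover have "serve after \<pi> (\<lambda>_ _. p) (\<lambda>_ _. 1) j k (h @ [Offer i False])
        \<le> a + c * real s + (1 - c) * (1 - (1 - p) ^ m)"
      using Suc.IH[of "h @ [Offer i False]"] offerable_snoc_refusal[of i n h] i
      by (simp add: s_def m_def unsold_def sold_items_snoc_Offer)
    ultimately have "p * (1 + after (h @ [Offer i True]))
        + (1 - p) * serve after \<pi> (\<lambda>_ _. p) (\<lambda>_ _. 1) j k (h @ [Offer i False])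
      \<le> p * (1 + (a + c * (real s - 1))) + (1 - p) * (a + c * real s + (1 - c) * (1 - (1 - p) ^ m))"
      using p by (intro add_mono mult_left_mono) auto
    also have "\<dots> = M" by (simp add: M_def m s_def algebra_simps)
    finally show ?thesis using Some by simp
  qed
  then show ?case
    unfolding serve.simps M_def[symmetric]
    by (rule pmf_expectation_le_const[OF valid_policy_finite_support[OF \<pi>]])
qed

abbreviation rev_In :: "nat \<Rightarrow> nat \<Rightarrow> policy \<Rightarrow> event list \<Rightarrow> real" where
  "rev_In n t \<equiv> rev_from n t (\<lambda>_. 1 / real n) (\<lambda>_. n) (\<lambda>_ _. 1 / real n) (\<lambda>_ _. 1)"

lemma rev_In_le_potential:
  assumes \<pi>: "valid_policy n \<pi>" and n: "n \<ge> 2"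
  shows "rev_In n t \<pi> h \<le> potential n t (unsold n h)"
proof (induction t arbitrary: h)
  case 0
  show ?case by (simp add: potential_def potential_base_def sale_gain_def)
next
  case (Suc t)
  define B where "B = potential n (Suc t) (unsold n h)"
  have serve_le_B: "serve (rev_In n t \<pi>) \<pi> (\<lambda>_ _. 1 / real n) (\<lambda>_ _. 1) j n (h @ [Arrive (Some j)]) \<le> B"
    for j
  proof -
    have "unsold n (h @ [Arrive (Some j)]) = unsold n h"
      and "min n (offerable n (h @ [Arrive (Some j)])) = unsold n h"
      using unsold_le[of n h]
      by (simp_all add: unsold_def offerable_def sold_items_snoc_Arrive current_offers_snoc_Arrive)
    moreover have "0 \<le> 1 / real n" "1 / real n \<le> 1" "1 - sale_gain n t \<le> 1"
      using n sale_gain_nonneg[OF n] by simp_all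
    ultimately have "serve (rev_In n t \<pi>) \<pi> (\<lambda>_ _. 1 / real n) (\<lambda>_ _. 1) j n (h @ [Arrive (Some j)])
        \<le> potential n t (unsold n h) + sale_gain n t * (1 - (1 - 1 / real n) ^ unsold n h)"
      using serve_le[OF \<pi> _ _ _ Suc.IH[unfolded potential_def], where j = j and k = n
          and h = "h @ [Arrive (Some j)]"]
      by (simp add: potential_def)
    also have "\<dots> \<le> B" unfolding B_def by (rule potential_step[OF n])
    finally show ?thesis .
  qed
  have "rev_In n (Suc t) \<pi> h
      = (\<Sum>j<n. 1 / real n * serve (rev_In n t \<pi>) \<pi> (\<lambda>_ _. 1 / real n) (\<lambda>_ _. 1) j n (h @ [Arrive (Some j)]))"
    using n by simp
  also have "\<dots> \<le> (\<Sum>j<n. 1 / real n * B)"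
    using serve_le_B by (intro sum_mono mult_left_mono) auto
  also have "\<dots> = B" using n by simp
  finally show ?case unfolding B_def .
qed

lemma expected_revenue_In_le:
  assumes "valid_policy n \<pi>" "n \<ge> 2"
  shows "expected_revenue n n n (\<lambda>_. 1 / real n) (\<lambda>_. n) (\<lambda>_ _. 1 / real n) (\<lambda>_ _. 1) \<pi>
    \<le> real n * ratio_bound n"
proof -
  have "unsold n [] = n" by (simp add: unsold_def sold_items_def)
  then show ?thesis
    using rev_In_le_potential[OF assms, of n "[]"] potential_le_ratio_bound[OF assms(2)]
    by (simp add: expected_revenue_def)
qed

lemma lp_opt_In:
  assumes n: "n > 0"
  shows "lp_opt n n n (\<lambda>_. 1 / real n) (\<lambda>_. n) (\<lambda>_ _. 1 / real n) (\<lambda>_ _. 1) = real n"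
  unfolding lp_opt_def
proof (rule cSup_eq_maximum)
  have "lp_feasible n n n (\<lambda>_. 1 / real n) (\<lambda>_. n) (\<lambda>_ _. 1 / real n) (\<lambda>_ _. 1)"
    and "lp_objective n n n (\<lambda>_. 1 / real n) (\<lambda>_ _. 1 / real n) (\<lambda>_ _. 1) (\<lambda>_ _. 1) = real n"
    using n by (simp_all add: lp_feasible_def lp_objective_def)
  then show "real n \<in> {lp_objective n n n (\<lambda>_. 1 / real n) (\<lambda>_ _. 1 / real n) (\<lambda>_ _. 1) x |x.
      lp_feasible n n n (\<lambda>_. 1 / real n) (\<lambda>_. n) (\<lambda>_ _. 1 / real n) x}"
    by force
next
  fix y
  assume "y \<in> {lp_objective n n n (\<lambda>_. 1 / real n) (\<lambda>_ _. 1 / real n) (\<lambda>_ _. 1) x |x.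
      lp_feasible n n n (\<lambda>_. 1 / real n) (\<lambda>_. n) (\<lambda>_ _. 1 / real n) x}"
  then obtain x where y: "y = (\<Sum>j<n. real n * (1 / real n) * (\<Sum>i<n. 1 * (1 / real n) * x i j))"
    and x: "\<And>i j. i < n \<Longrightarrow> j < n \<Longrightarrow> x i j \<le> 1"
    by (auto simp: lp_objective_def lp_feasible_def)
  have "y \<le> (\<Sum>j<n. real n * (1 / real n) * (\<Sum>i<n. 1 * (1 / real n) * 1))"
    unfolding y using x by (intro sum_mono mult_left_mono) auto
  also have "\<dots> = real n" using n by simp
  finally show "y \<le> real n" .
qed

lemma A_n_over_OPT_n_le:
  assumes n: "n \<ge> 2"
  shows "A_n n / OPT_n n \<le> ratio_bound n"
proof -
  have "A_n n \<le> real n * ratio_bound n"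
    unfolding A_n_def best_revenue_def
  proof (rule cSup_least)
    show "{expected_revenue n n n (\<lambda>_. 1 / real n) (\<lambda>_. n) (\<lambda>_ _. 1 / real n) (\<lambda>_ _. 1) \<pi> |\<pi>.
        valid_policy n \<pi>} \<noteq> {}"
      using valid_policy_def[of n "\<lambda>_. return_pmf None"] by auto
  qed (use expected_revenue_In_le[OF _ n] in auto)
  then show ?thesis using n lp_opt_In[of n] by (simp add: OPT_n_def field_simps)
qed

lemma hard_instance_exists:
  assumes n: "n \<ge> 2" and c: "ratio_bound n \<le> c"
  shows "\<exists>n m T q l p r. n > 0 \<and> instance_ok n m T q l p r
    \<and> (\<forall>j<m. (\<Sum>i<n. p i j) \<le> 1) \<and> (\<forall>j<m. l j \<ge> n)
    \<and> lp_opt n m T q l p r > 0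
    \<and> (\<forall>\<pi>. valid_policy n \<pi> \<longrightarrow> expected_revenue n m T q l p r \<pi> \<le> c * lp_opt n m T q l p r)"
proof (intro exI conjI allI impI)
  let ?OPT = "lp_opt n n n (\<lambda>_. 1 / real n) (\<lambda>_. n) (\<lambda>_ _. 1 / real n) (\<lambda>_ _. 1)"
  have OPT: "?OPT = real n" using n by (simp add: lp_opt_In)
  show "n > 0" and "instance_ok n n n (\<lambda>_. 1 / real n) (\<lambda>_. n) (\<lambda>_ _. 1 / real n) (\<lambda>_ _. 1)"
    and "(\<Sum>i<n. 1 / real n) \<le> 1" and "n \<le> n" and "?OPT > 0"
    using n OPT by (simp_all add: instance_ok_def)
  fix \<pi> assume "valid_policy n \<pi>"
  then have "expected_revenue n n n (\<lambda>_. 1 / real n) (\<lambda>_. n) (\<lambda>_ _. 1 / real n) (\<lambda>_ _. 1) \<pi>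
      \<le> real n * ratio_bound n"
    using n by (rule expected_revenue_In_le)
  also have "\<dots> \<le> real n * c" using c by (intro mult_left_mono) auto
  also have "\<dots> = c * ?OPT" by (simp add: OPT)
  finally show "expected_revenue n n n (\<lambda>_. 1 / real n) (\<lambda>_. n) (\<lambda>_ _. 1 / real n) (\<lambda>_ _. 1) \<pi>
      \<le> c * ?OPT" .
qed

theorem lemma3p3:
  shows "limsup (\<lambda>n. ereal (A_n n / OPT_n n)) \<le> ereal (1 - ln (2 - exp (-1)))
    \<and> (\<forall>\<epsilon>>0. \<exists>n m T q l p r. n > 0 \<and> instance_ok n m T q l p r
          \<and> (\<forall>j<m. (\<Sum>i<n. p i j) \<le> 1) \<and> (\<forall>j<m. l j \<ge> n)
          \<and> lp_opt n m T q l p r > 0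
          \<and> (\<forall>\<pi>. valid_policy n \<pi> \<longrightarrow>
               expected_revenue n m T q l p r \<pi>
                 \<le> (1 - ln (2 - exp (-1)) + \<epsilon>) * lp_opt n m T q l p r))"
proof (intro conjI allI impI)
  have "eventually (\<lambda>n. ereal (A_n n / OPT_n n) \<le> ereal (ratio_bound n)) sequentially"
    using eventually_ge_at_top[of 2] by eventually_elim (simp add: A_n_over_OPT_n_le)
  then have "limsup (\<lambda>n. ereal (A_n n / OPT_n n)) \<le> limsup (\<lambda>n. ereal (ratio_bound n))"
    by (rule Limsup_mono)
  also have "\<dots> = ereal (1 - ln (2 - exp (-1)))"
    using ratio_bound_tendsto by (intro lim_imp_Limsup) (auto simp: lim_ereal)
  finally show "limsup (\<lambda>n. ereal (A_n n / OPT_n n)) \<le> ereal (1 - ln (2 - exp (-1)))" .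
next
  fix \<epsilon> :: real
  assume "\<epsilon> > 0"
  then have "eventually (\<lambda>n. n \<ge> 2 \<and> ratio_bound n < 1 - ln (2 - exp (-1)) + \<epsilon>) sequentially"
    by (intro eventually_conj eventually_ge_at_top order_tendstoD(2)[OF ratio_bound_tendsto]) simp
  then obtain n where n: "n \<ge> 2" and bound: "ratio_bound n < 1 - ln (2 - exp (-1)) + \<epsilon>"
    using eventually_happens'[OF sequentially_bot] by blast
  show "\<exists>n m T q l p r. n > 0 \<and> instance_ok n m T q l p r
          \<and> (\<forall>j<m. (\<Sum>i<n. p i j) \<le> 1) \<and> (\<forall>j<m. l j \<ge> n)
          \<and> lp_opt n m T q l p r > 0
          \<and> (\<forall>\<pi>. valid_policy n \<pi> \<longrightarrow>
               expected_revenue n m T q l p r \<pi>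
                 \<le> (1 - ln (2 - exp (-1)) + \<epsilon>) * lp_opt n m T q l p r)"
    by (rule hard_instance_exists[OF n less_imp_le[OF bound]])
qed

end
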